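(* In the setting below, for $1\le i,j\le r$ the block $N[i,j]$ of $N=\lim_{t\to\infty}(S+tP)^{-1}$ equals $$c_{ij}\begin{pmatrix}\mathbf{1}_{p_i}\mathbf{1}_{p_j}^\top&-\mathbf{1}_{p_i}\mathbf{1}_{q_j}^\top\\-\mathbf{1}_{q_i}\mathbf{1}_{p_j}^\top&\mathbf{1}_{q_i}\mathbf{1}_{q_j}^\top\end{pmatrix}$$ with $$c_{ii}=\frac{\ell}{\alpha(\alpha+\ell\gamma)(p_i+q_i)}\left(\frac\alpha\ell+\gamma-\frac{(p_i-q_i)^2}{p_i+q_i}\right),\qquad c_{ij}=\frac{-\ell}{\alpha(\alpha+\ell\gamma)}\cdot\frac{p_i-q_i}{p_i+q_i}\cdot\frac{p_j-q_j}{p_j+q_j}\ \ (j\ne i).$$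
   Context: Let $n\ge3$, $\ell>0$, $\alpha\ge(n-2)\ell$, $S=\alpha I_n+\ell\mathbf{1}_n\mathbf{1}_n^\top$. For a real matrix $P$, $\Delta_i(P)=|P_{ii}|-\sum_{j\ne i}|P_{ij}|$. A signless Laplacian is a real symmetric $n\times n$ matrix $P$ with $P_{ij}\in\{0,1\}$ for $i\ne j$, $P_{ii}\ge0$, and $\Delta_i(P)\in\{0,2\}$ for all $i$; its graph $G$ has vertex set $\{1,\dots,n\}$, an edge $\{i,j\}$ ($i\ne j$) whenever $P_{ij}=1$, and a self-loop $\{i,i\}$ whenever $\Delta_i(P)=2$ (graphs with self-loops are not bipartite). Let $G_1,\dots,G_r$ be the bipartite connected components of $G$, $G_i$ having bipartition classes of sizes $p_i$ and $q_i$; order the vertices of each $G_i$ with the $p_i$-class first. $N[i,j]$ denotes the submatrix of $N$ with rows indexed by vertices of $G_i$ and columns by vertices of $G_j$. $\gamma=\sum_{i=1}^r\frac{(p_i-q_i)^2}{p_i+q_i}$. *)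

theory Defs
  imports "HOL-Analysis.Analysis"
begin

definition Delta :: "real^'n^'n \<Rightarrow> 'n \<Rightarrow> real" where
  "Delta P i = \<bar>P$i$i\<bar> - (\<Sum>j\<in>UNIV - {i}. \<bar>P$i$j\<bar>)"

definition signless_laplacian :: "real^'n^'n \<Rightarrow> bool" where
  "signless_laplacian P \<longleftrightarrow> transpose P = P
     \<and> (\<forall>i j. i \<noteq> j \<longrightarrow> P$i$j \<in> {0, 1})
     \<and> (\<forall>i. P$i$i \<ge> 0)
     \<and> (\<forall>i. Delta P i \<in> {0, 2})"

definition graph_edge :: "real^'n^'n \<Rightarrow> 'n \<Rightarrow> 'n \<Rightarrow> bool" where
  "graph_edge P i j \<longleftrightarrow> i \<noteq> j \<and> P$i$j = 1"

definition self_loop :: "real^'n^'n \<Rightarrow> 'n \<Rightarrow> bool" where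
  "self_loop P i \<longleftrightarrow> Delta P i = 2"

definition conn_comp :: "real^'n^'n \<Rightarrow> 'n set \<Rightarrow> bool" where
  "conn_comp P C \<longleftrightarrow> (\<exists>v. C = {u. (graph_edge P)\<^sup>*\<^sup>* v u})"

definition is_bipartition :: "real^'n^'n \<Rightarrow> 'n set \<Rightarrow> 'n set \<Rightarrow> 'n set \<Rightarrow> bool" where
  "is_bipartition P C A B \<longleftrightarrow> A \<union> B = C \<and> A \<inter> B = {}
     \<and> (\<forall>u\<in>C. \<forall>v\<in>C. graph_edge P u v \<longrightarrow> (u \<in> A \<longleftrightarrow> v \<in> B))"

definition bipartite_comp :: "real^'n^'n \<Rightarrow> 'n set \<Rightarrow> bool" where
  "bipartite_comp P C \<longleftrightarrow> conn_comp P C \<and> (\<forall>v\<in>C. \<not> self_loop P v)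
     \<and> (\<exists>A B. is_bipartition P C A B)"

end

theory Submission
  imports Defs
begin

(*
  General part: if S is coercive (x.Sx >= alpha |x|^2, alpha > 0) and P is symmetric
  positive semidefinite, then M_t is invertible for t >= 0; if moreover a matrix N
  satisfies P N = 0 and every residual z - S N z lies in the range of P, say P y, then
  the energy estimate  2 alpha t |M_t^-1 z - N z|^2 <= y.Py  gives M_t^-1 -> N as
  t -> oo (resolvent_limit).  Membership in the range of a symmetric P is certified by
  orthogonality to its kernel (symmetric_range_orthogonal_kernel).

  Combinatorial part: for a signless Laplacian, 2 x.Px is 2 sum_u Delta_u x_u^2 plus the
  sum of (x_u + x_v)^2 over ordered edges, so P is psd and its kernel is spanned by the
  signed indicator vectors k_i of the bipartite components (+1 on A_i, -1 on B_i).
  We take N = sum_{a,b} c_ab k_a k_b^T with the coefficients c of the statement: then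
  P N = 0, and the residual is orthogonal to every k_j because c solves the linear system
  alpha m_j c_jb + l w_j sum_a w_a c_ab = delta_jb  (m_i = p_i + q_i, w_i = p_i - q_i).
*)

lemma matrix_inv_inverse:
  fixes M :: "'a::field^'n^'n"
  assumes "invertible M"
  shows "M ** matrix_inv M = mat 1" and "matrix_inv M ** M = mat 1"
proof -
  obtain M' where "M ** M' = mat 1 \<and> M' ** M = mat 1"
    using assms by (auto simp: invertible_def)
  then have "M ** matrix_inv M = mat 1 \<and> matrix_inv M ** M = mat 1"
    unfolding matrix_inv_def by (rule someI)
  then show "M ** matrix_inv M = mat 1" and "matrix_inv M ** M = mat 1" by simp_all
qed

lemma invertible_if_trivial_kernel:
  fixes M :: "'a::field^'n^'n"
  assumes "\<And>x. M *v x = 0 \<Longrightarrow> x = 0"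
  shows "invertible M"
  using assms by (simp add: invertible_left_inverse matrix_left_invertible_ker)

lemma symmetric_matrix_inner:
  fixes P :: "real^'n^'n"
  assumes "transpose P = P"
  shows "(P *v x) \<bullet> y = x \<bullet> (P *v y)"
  by (metis assms dot_lmul_matrix vector_transpose_matrix)

lemma combination_orthogonal_eq_0:
  fixes k :: "'i \<Rightarrow> 'a::real_inner"
  assumes "\<And>j. j \<in> I \<Longrightarrow> k j \<bullet> (\<Sum>i\<in>I. a i *\<^sub>R k i) = 0"
  shows "(\<Sum>i\<in>I. a i *\<^sub>R k i) = 0"
proof -
  let ?w = "\<Sum>i\<in>I. a i *\<^sub>R k i"
  have "?w \<bullet> ?w = (\<Sum>i\<in>I. a i * (k i \<bullet> ?w))" by (simp add: inner_sum_left)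
  also have "\<dots> = 0" using assms by simp
  finally show ?thesis by simp
qed

(* For symmetric P, range P is the orthogonal complement of its kernel: if every kernel
   vector orthogonal to the k_i is 0, then any e orthogonal to the k_i lies in range P.
   The map y |-> P y + sum_i (k_i.y) k_i is injective, hence onto. *)
lemma symmetric_range_orthogonal_kernel:
  fixes P :: "real^'n^'n" and k :: "'i \<Rightarrow> real^'n"
  assumes sym: "transpose P = P" and fin: "finite I"
    and Pk: "\<And>i. i \<in> I \<Longrightarrow> P *v k i = 0"
    and kernel: "\<And>x. P *v x = 0 \<Longrightarrow> (\<forall>i\<in>I. k i \<bullet> x = 0) \<Longrightarrow> x = 0"
    and e: "\<And>i. i \<in> I \<Longrightarrow> k i \<bullet> e = 0"
  shows "\<exists>y. P *v y = e"
proof -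
  define w where "w y = (\<Sum>i\<in>I. (k i \<bullet> y) *\<^sub>R k i)" for y
  define f where "f y = P *v y + w y" for y
  have k_f: "k j \<bullet> f y = k j \<bullet> w y" if "j \<in> I" for j y
    using symmetric_matrix_inner[OF sym, of "k j" y] Pk[OF that]
    by (simp add: f_def inner_add_right)
  have w_0: "w y = 0" if "\<forall>j\<in>I. k j \<bullet> f y = 0" for y
    using that k_f unfolding w_def by (intro combination_orthogonal_eq_0) auto
  have "linear f"
    by (rule linearI) (simp_all add: f_def w_def matrix_vector_right_distrib
        matrix_vector_mult_scaleR inner_add_right scaleR_add_left sum.distrib
        scaleR_sum_right scaleR_add_right)
  moreover have "inj f"
  proof -
    have "y = 0" if "f y = 0" for y
    proof -
      have wy: "w y = 0" using that by (intro w_0) simp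
      have "(\<Sum>i\<in>I. (k i \<bullet> y)^2) = y \<bullet> w y"
        by (simp add: w_def inner_sum_right power2_eq_square inner_commute)
      then have "\<forall>i\<in>I. k i \<bullet> y = 0" using wy fin by (simp add: sum_nonneg_eq_0_iff)
      moreover have "P *v y = 0" using that wy by (simp add: f_def)
      ultimately show "y = 0" using kernel by blast
    qed
    then show ?thesis using \<open>linear f\<close> linear_injective_0 by blast
  qed
  ultimately obtain y where fy: "f y = e"
    using linear_injective_imp_surjective by (metis surjD)
  have "w y = 0" using e by (intro w_0) (simp add: fy)
  then show ?thesis using fy by (auto simp: f_def)
qed

lemma matrix_pencil_apply:
  fixes S P :: "real^'n^'n"
  shows "(S + t *\<^sub>R P) *v x = S *v x + t *\<^sub>R (P *v x)"
  by (simp add: matrix_vector_mult_add_rdistrib scaleR_matrix_vector_assoc)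

lemma psd_cross_term:
  fixes P :: "real^'n^'n"
  assumes sym: "transpose P = P" and psd: "\<And>x. 0 \<le> x \<bullet> (P *v x)"
  shows "2 * (x \<bullet> (P *v y)) \<le> x \<bullet> (P *v x) + y \<bullet> (P *v y)"
proof -
  have "0 \<le> (x - y) \<bullet> (P *v (x - y))" by (rule psd)
  also have "\<dots> = x \<bullet> (P *v x) - 2 * (x \<bullet> (P *v y)) + y \<bullet> (P *v y)"
    using symmetric_matrix_inner[OF sym, of y x]
    by (simp add: matrix_vector_mult_diff_distrib inner_diff_left inner_diff_right inner_commute)
  finally show ?thesis by simp
qed

lemma resolvent_invertible:
  fixes S P :: "real^'n^'n"
  assumes \<alpha>: "\<alpha> > 0" and S: "\<And>x. \<alpha> * (x \<bullet> x) \<le> x \<bullet> (S *v x)"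
    and psd: "\<And>x. 0 \<le> x \<bullet> (P *v x)" and t: "0 \<le> t"
  shows "invertible (S + t *\<^sub>R P)"
proof (rule invertible_if_trivial_kernel)
  fix x assume "(S + t *\<^sub>R P) *v x = 0"
  then have "x \<bullet> (S *v x) + t * (x \<bullet> (P *v x)) = 0"
    by (metis inner_add_right inner_scaleR_right inner_zero_right matrix_pencil_apply)
  moreover have "0 \<le> t * (x \<bullet> (P *v x))" using psd t by simp
  ultimately have "\<alpha> * (x \<bullet> x) \<le> 0" using S[of x] by linarith
  then have "x \<bullet> x \<le> 0" using \<alpha> by (simp add: mult_le_0_iff)
  then show "x = 0" by (metis antisym inner_eq_zero_iff inner_ge_zero)
qed

(* Energy estimate: with x = M_t^-1 z - N z we have M_t x = P y, hence
   alpha |x|^2 + t x.Px <= x.Py, and the cross term is absorbed by psd_cross_term. *)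
lemma resolvent_error_bound:
  fixes S P N :: "real^'n^'n"
  assumes \<alpha>: "\<alpha> > 0" and S: "\<And>x. \<alpha> * (x \<bullet> x) \<le> x \<bullet> (S *v x)"
    and sym: "transpose P = P" and psd: "\<And>x. 0 \<le> x \<bullet> (P *v x)"
    and PN: "P *v (N *v z) = 0" and y: "P *v y = z - S *v (N *v z)" and t: "0 < t"
  shows "2 * \<alpha> * t * norm (matrix_inv (S + t *\<^sub>R P) *v z - N *v z)^2 \<le> y \<bullet> (P *v y)"
proof -
  let ?M = "S + t *\<^sub>R P"
  define x where "x = matrix_inv ?M *v z - N *v z"
  have "?M ** matrix_inv ?M = mat 1"
    using matrix_inv_inverse(1)[OF resolvent_invertible[OF \<alpha> S psd]] t by simp
  then have "?M *v x = z - ?M *v (N *v z)"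
    by (simp add: x_def matrix_vector_mult_diff_distrib matrix_vector_mul_assoc)
  also have "\<dots> = P *v y"
    using PN y by (simp add: matrix_pencil_apply)
  finally have "S *v x + t *\<^sub>R (P *v x) = P *v y"
    by (simp add: matrix_pencil_apply)
  then have energy: "x \<bullet> (S *v x) + t * (x \<bullet> (P *v x)) = x \<bullet> (P *v y)"
    by (metis inner_add_right inner_scaleR_right)
  have "2 * (t *\<^sub>R x \<bullet> (P *v y)) \<le> t *\<^sub>R x \<bullet> (P *v (t *\<^sub>R x)) + y \<bullet> (P *v y)"
    by (rule psd_cross_term[OF sym psd])
  then have cross: "2 * t * (x \<bullet> (P *v y)) \<le> t^2 * (x \<bullet> (P *v x)) + y \<bullet> (P *v y)"
    by (simp add: power2_eq_square algebra_simps)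
  have "2 * t * (\<alpha> * (x \<bullet> x)) \<le> 2 * t * (x \<bullet> (P *v y) - t * (x \<bullet> (P *v x)))"
    using energy S[of x] t by (intro mult_left_mono) auto
  also have "\<dots> \<le> y \<bullet> (P *v y) - t^2 * (x \<bullet> (P *v x))"
    using cross by (simp add: power2_eq_square algebra_simps)
  also have "\<dots> \<le> y \<bullet> (P *v y)" using psd[of x] by simp
  finally have "2 * \<alpha> * t * (x \<bullet> x) \<le> y \<bullet> (P *v y)" by (simp add: mult_ac)
  then show ?thesis by (simp add: x_def power2_norm_eq_inner)
qed

(* The limit of the resolvent-type family (S + t P)^-1: columns converge at rate
   O(t^(-1/2)) by the energy estimate, and entries are coordinates of columns. *)
lemma resolvent_limit:
  fixes S P N :: "real^'n^'n"
  assumes \<alpha>: "\<alpha> > 0" and S: "\<And>x. \<alpha> * (x \<bullet> x) \<le> x \<bullet> (S *v x)"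
    and sym: "transpose P = P" and psd: "\<And>x. 0 \<le> x \<bullet> (P *v x)"
    and PN: "\<And>z. P *v (N *v z) = 0"
    and residual: "\<And>z. \<exists>y. P *v y = z - S *v (N *v z)"
  shows "((\<lambda>t. matrix_inv (S + t *\<^sub>R P)) \<longlongrightarrow> N) at_top"
proof -
  have columns: "((\<lambda>t. matrix_inv (S + t *\<^sub>R P) *v z) \<longlongrightarrow> N *v z) at_top" for z
  proof -
    obtain y where y: "P *v y = z - S *v (N *v z)" using residual by blast
    define C where "C = y \<bullet> (P *v y) / (2 * \<alpha>)"
    have "\<forall>\<^sub>F t in at_top. norm (matrix_inv (S + t *\<^sub>R P) *v z - N *v z) \<le> sqrt (C / t)"
    proof (rule eventually_at_top_linorderI[of 1])
      fix t :: real assume "1 \<le> t"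
      then have "2 * \<alpha> * t * norm (matrix_inv (S + t *\<^sub>R P) *v z - N *v z)^2 \<le> y \<bullet> (P *v y)"
        by (intro resolvent_error_bound[OF \<alpha> S sym psd PN y]) simp
      then have "norm (matrix_inv (S + t *\<^sub>R P) *v z - N *v z)^2 \<le> C / t"
        using \<alpha> \<open>1 \<le> t\<close> by (simp add: C_def pos_le_divide_eq mult_ac)
      then show "norm (matrix_inv (S + t *\<^sub>R P) *v z - N *v z) \<le> sqrt (C / t)"
        by (simp add: real_le_rsqrt)
    qed
    moreover have "((\<lambda>t. C / t) \<longlongrightarrow> 0) at_top"
      by (intro tendsto_divide_0[OF tendsto_const] filterlim_at_top_imp_at_infinity filterlim_ident)
    then have "((\<lambda>t. sqrt (C / t)) \<longlongrightarrow> 0) at_top"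
      using tendsto_real_sqrt by fastforce
    ultimately show ?thesis by (rule LIM_zero_cancel[OF Lim_null_comparison])
  qed
  show ?thesis
  proof (intro vec_tendstoI)
    fix u v
    have "((\<lambda>t. (matrix_inv (S + t *\<^sub>R P) *v axis v 1) $ u) \<longlongrightarrow> (N *v axis v 1) $ u) at_top"
      by (intro tendsto_vec_nth columns)
    then show "((\<lambda>t. matrix_inv (S + t *\<^sub>R P) $ u $ v) \<longlongrightarrow> N $ u $ v) at_top"
      by (simp add: matrix_vector_mult_basis column_def)
  qed
qed

locale signless_laplacian_matrix =
  fixes P :: "real^'n^'n"
  assumes signless: "signless_laplacian P"
begin

abbreviation edge :: "'n \<Rightarrow> 'n \<Rightarrow> bool" where "edge \<equiv> graph_edge P"

definition adj :: "'n \<Rightarrow> 'n \<Rightarrow> real" where "adj u v = (if edge u v then 1 else 0)"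

lemma symmetric: "transpose P = P"
  using signless by (simp add: signless_laplacian_def)

lemma edge_sym: "edge u v \<Longrightarrow> edge v u"
  using symmetric by (auto simp: graph_edge_def transpose_def vec_eq_iff)

lemma adj_sym: "adj u v = adj v u"
  using edge_sym by (auto simp: adj_def)

lemma offdiag_eq_adj: "u \<noteq> v \<Longrightarrow> P$u$v = adj u v"
  using signless by (auto simp: signless_laplacian_def adj_def graph_edge_def)

lemma Delta_nonneg: "0 \<le> Delta P u"
proof -
  have "Delta P u \<in> {0, 2}" using signless by (simp add: signless_laplacian_def)
  then show ?thesis by auto
qed

lemma diag_eq: "P$u$u = Delta P u + (\<Sum>v\<in>UNIV. adj u v)"
proof -
  have "(\<Sum>v\<in>UNIV. adj u v) = (\<Sum>v\<in>UNIV - {u}. adj u v)"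
    by (subst sum.remove[of UNIV u]) (auto simp: adj_def graph_edge_def)
  also have "\<dots> = (\<Sum>v\<in>UNIV - {u}. \<bar>P$u$v\<bar>)"
    by (intro sum.cong) (auto simp: offdiag_eq_adj adj_def)
  finally show ?thesis
    using signless by (simp add: Delta_def signless_laplacian_def)
qed

lemma entry_eq: "P$u$v = (if v = u then Delta P u + (\<Sum>w\<in>UNIV. adj u w) else 0) + adj u v"
proof (cases "v = u")
  case True
  then show ?thesis using diag_eq by (simp add: adj_def graph_edge_def)
next
  case False
  then show ?thesis using offdiag_eq_adj by simp
qed

lemma apply_eq: "(P *v x)$u = Delta P u * x$u + (\<Sum>v\<in>UNIV. adj u v * (x$u + x$v))"
proof -
  have "(P *v x)$u = (\<Sum>v\<in>UNIV. (if v = u then Delta P u + (\<Sum>w\<in>UNIV. adj u w) else 0) * x$v)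
      + (\<Sum>v\<in>UNIV. adj u v * x$v)"
    by (simp add: matrix_vector_mult_def entry_eq distrib_right sum.distrib)
  also have "(\<Sum>v\<in>UNIV. (if v = u then Delta P u + (\<Sum>w\<in>UNIV. adj u w) else 0) * x$v)
      = (Delta P u + (\<Sum>w\<in>UNIV. adj u w)) * x$u"
    by (simp add: if_distrib[of "\<lambda>a. a * _"] cong: if_cong)
  finally show ?thesis
    by (simp add: distrib_left distrib_right sum.distrib sum_distrib_right)
qed

lemma quadratic_form:
  "2 * (x \<bullet> (P *v x)) = 2 * (\<Sum>u\<in>UNIV. Delta P u * (x$u)^2)
     + (\<Sum>u\<in>UNIV. \<Sum>v\<in>UNIV. adj u v * (x$u + x$v)^2)"
proof -
  define T where "T = (\<Sum>u\<in>UNIV. \<Sum>v\<in>UNIV. adj u v * x$u * (x$u + x$v))"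
  have form: "x \<bullet> (P *v x) = (\<Sum>u\<in>UNIV. Delta P u * (x$u)^2) + T"
    by (simp add: T_def inner_vec_def apply_eq sum.distrib sum_distrib_left
        power2_eq_square algebra_simps)
  have "T = (\<Sum>v\<in>UNIV. \<Sum>u\<in>UNIV. adj u v * x$u * (x$u + x$v))"
    unfolding T_def by (rule sum.swap)
  also have "\<dots> = (\<Sum>u\<in>UNIV. \<Sum>v\<in>UNIV. adj u v * x$v * (x$u + x$v))"
    by (simp add: adj_sym algebra_simps)
  finally have swapped: "T = (\<Sum>u\<in>UNIV. \<Sum>v\<in>UNIV. adj u v * x$v * (x$u + x$v))" .
  have "2 * T = T + T" by simp
  also have "\<dots> = (\<Sum>u\<in>UNIV. \<Sum>v\<in>UNIV.
      adj u v * x$u * (x$u + x$v) + adj u v * x$v * (x$u + x$v))"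
    by (subst (2) swapped) (simp add: T_def sum.distrib)
  also have "\<dots> = (\<Sum>u\<in>UNIV. \<Sum>v\<in>UNIV. adj u v * (x$u + x$v)^2)"
    by (intro sum.cong refl) (simp add: power2_eq_square algebra_simps)
  finally have "2 * T = \<dots>" .
  then show ?thesis using form by simp
qed

lemma form_parts_nonneg:
  "0 \<le> (\<Sum>u\<in>UNIV. Delta P u * (x$u)^2)"
  "0 \<le> (\<Sum>u\<in>UNIV. \<Sum>v\<in>UNIV. adj u v * (x$u + x$v)^2)"
  by (auto intro!: sum_nonneg mult_nonneg_nonneg Delta_nonneg simp: adj_def)

lemma psd: "0 \<le> x \<bullet> (P *v x)"
  using quadratic_form[of x] form_parts_nonneg[of x] by linarith

lemma form_zero_edge:
  assumes "x \<bullet> (P *v x) = 0" and "edge u v"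
  shows "x$u + x$v = 0"
proof -
  have "(\<Sum>u\<in>UNIV. \<Sum>v\<in>UNIV. adj u v * (x$u + x$v)^2) = 0"
    using quadratic_form[of x] form_parts_nonneg[of x] assms(1) by linarith
  then have "adj u v * (x$u + x$v)^2 = 0"
    by (simp add: sum_nonneg_eq_0_iff sum_nonneg adj_def)
  then show ?thesis using assms(2) by (simp add: adj_def)
qed

lemma form_zero_loop:
  assumes "x \<bullet> (P *v x) = 0" and "self_loop P u"
  shows "x$u = 0"
proof -
  have "(\<Sum>u\<in>UNIV. Delta P u * (x$u)^2) = 0"
    using quadratic_form[of x] form_parts_nonneg[of x] assms(1) by linarith
  then have "Delta P u * (x$u)^2 = 0"
    by (simp add: sum_nonneg_eq_0_iff Delta_nonneg)
  then show ?thesis using assms(2) by (simp add: self_loop_def)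
qed

end

locale bipartite_decomposition = signless_laplacian_matrix P for P :: "real^'n^'n" +
  fixes r :: nat and G A B :: "nat \<Rightarrow> 'n set"
  assumes G_inj: "inj_on G {..<r}"
    and G_comps: "G ` {..<r} = {C. bipartite_comp P C}"
    and G_bip: "\<forall>i<r. is_bipartition P (G i) (A i) (B i)"
begin

lemma component_bipartite: "i < r \<Longrightarrow> bipartite_comp P (G i)"
  using G_comps by blast

lemma component_from_member:
  assumes "i < r" and "u \<in> G i"
  shows "G i = {w. edge\<^sup>*\<^sup>* u w}"
proof -
  obtain v where v: "G i = {w. edge\<^sup>*\<^sup>* v w}"
    using component_bipartite[OF assms(1)] by (auto simp: bipartite_comp_def conn_comp_def)
  have vu: "edge\<^sup>*\<^sup>* v u" using assms(2) v by simp
  moreover have "edge\<^sup>*\<^sup>* u v"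
    using sympD[OF symp_rtranclp[OF sympI[OF edge_sym]] vu] .
  ultimately show ?thesis using v by (auto intro: rtranclp_trans)
qed

lemma component_closed: "i < r \<Longrightarrow> u \<in> G i \<Longrightarrow> edge u w \<Longrightarrow> w \<in> G i"
  using component_from_member by (auto intro: rtranclp.rtrancl_into_rtrancl)

lemma components_disjoint:
  assumes "i < r" and "j < r" and "u \<in> G i" and "u \<in> G j"
  shows "i = j"
proof -
  have "G i = G j" using component_from_member assms by metis
  then show ?thesis using G_inj assms(1,2) by (auto dest: inj_onD)
qed

lemma component_nonempty: "i < r \<Longrightarrow> G i \<noteq> {}"
  using component_bipartite by (auto simp: bipartite_comp_def conn_comp_def)

lemma component_loopless:
  assumes "i < r" and "u \<in> G i"
  shows "Delta P u = 0"
proof -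
  have "\<not> self_loop P u" using component_bipartite[OF assms(1)] assms(2)
    by (simp add: bipartite_comp_def)
  moreover have "Delta P u \<in> {0, 2}" using signless by (simp add: signless_laplacian_def)
  ultimately show ?thesis by (auto simp: self_loop_def)
qed

lemma bipartition:
  assumes "i < r"
  shows "A i \<union> B i = G i" and "A i \<inter> B i = {}"
    and "\<And>u v. u \<in> G i \<Longrightarrow> v \<in> G i \<Longrightarrow> edge u v \<Longrightarrow> u \<in> A i \<longleftrightarrow> v \<in> B i"
  using G_bip assms by (auto simp: is_bipartition_def)

definition sign :: "nat \<Rightarrow> 'n \<Rightarrow> real" where
  "sign i u = (if u \<in> A i then 1 else -1)"

lemma sign_flip:
  assumes "i < r" and "u \<in> G i" and "edge u w"
  shows "sign i w = - sign i u"
proof -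
  have "w \<in> G i" using component_closed assms by blast
  then have "u \<in> A i \<longleftrightarrow> w \<notin> A i"
    using bipartition[OF assms(1)] assms(2,3) by blast
  then show ?thesis by (auto simp: sign_def)
qed

definition kvec :: "nat \<Rightarrow> real^'n" where
  "kvec i = (\<chi> u. if u \<in> G i then sign i u else 0)"

definition csize :: "nat \<Rightarrow> real" where
  "csize i = real (card (A i)) + real (card (B i))"

definition imbalance :: "nat \<Rightarrow> real" where
  "imbalance i = real (card (A i)) - real (card (B i))"

lemma csize_card: "i < r \<Longrightarrow> csize i = real (card (G i))"
  using bipartition card_Un_disjoint[of "A i" "B i"] by (metis csize_def finite of_nat_add)

lemma csize_pos: "i < r \<Longrightarrow> 0 < csize i"
  using csize_card component_nonempty by (simp add: card_gt_0_iff)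

lemma kvec_inner:
  assumes "i < r" and "j < r"
  shows "kvec i \<bullet> kvec j = (if i = j then csize i else 0)"
proof (cases "i = j")
  case True
  have "kvec i \<bullet> kvec i = (\<Sum>u\<in>UNIV. if u \<in> G i then 1 else 0)"
    unfolding inner_vec_def kvec_def by (intro sum.cong) (auto simp: sign_def)
  also have "\<dots> = csize i"
    using csize_card[OF assms(1)] by (simp add: sum.If_cases)
  finally show ?thesis using True by simp
next
  case False
  have disjoint: "kvec i $ u * kvec j $ u = 0" for u
    using components_disjoint[OF assms _ _] False by (auto simp: kvec_def)
  show ?thesis unfolding inner_vec_def inner_real_def
    by (simp only: disjoint sum.neutral_const) (simp add: False)
qed

lemma kvec_sum:
  assumes "i < r"
  shows "kvec i \<bullet> 1 = imbalance i"
proof -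
  have "kvec i \<bullet> 1 = (\<Sum>u\<in>A i \<union> B i. sign i u)"
    using bipartition(1)[OF assms] by (simp add: inner_vec_def kvec_def sum.If_cases)
  also have "\<dots> = (\<Sum>u\<in>A i. sign i u) + (\<Sum>u\<in>B i. sign i u)"
    using bipartition(2)[OF assms] by (intro sum.union_disjoint) auto
  also have "(\<Sum>u\<in>B i. sign i u) = (\<Sum>u\<in>B i. -1)"
    using bipartition(2)[OF assms] by (intro sum.cong) (auto simp: sign_def)
  also have "(\<Sum>u\<in>A i. sign i u) = (\<Sum>u\<in>A i. 1)"
    by (intro sum.cong) (auto simp: sign_def)
  finally show ?thesis by (simp add: imbalance_def)
qed

lemma kvec_edge:
  assumes "i < r" and "edge u v"
  shows "kvec i $ u + kvec i $ v = 0"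
proof (cases "u \<in> G i")
  case True
  have "v \<in> G i" by (rule component_closed[OF assms(1) True assms(2)])
  moreover have "sign i v = - sign i u" by (rule sign_flip[OF assms(1) True assms(2)])
  ultimately show ?thesis using True by (simp add: kvec_def)
next
  case False
  then have "v \<notin> G i" using assms component_closed edge_sym by blast
  then show ?thesis using False by (simp add: kvec_def)
qed

lemma P_kvec:
  assumes "i < r"
  shows "P *v kvec i = 0"
proof -
  have "(P *v kvec i)$u = 0" for u
  proof -
    have loop: "Delta P u * kvec i $ u = 0"
      using component_loopless[OF assms] by (simp add: kvec_def)
    have edges: "adj u v * (kvec i $ u + kvec i $ v) = 0" for v
      using kvec_edge[OF assms] by (simp add: adj_def)
    show ?thesis by (simp only: apply_eq loop edges sum.neutral_const add_0)
  qed
  then show ?thesis by (simp add: vec_eq_iff)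
qed


lemma form_zero_sign_constant:
  assumes form: "x \<bullet> (P *v x) = 0" and i: "i < r" and u: "u \<in> G i" and w: "w \<in> G i"
  shows "x$w * sign i w = x$u * sign i u"
proof -
  have "edge\<^sup>*\<^sup>* u w" using component_from_member[OF i u] w by simp
  then show ?thesis
  proof (induction rule: rtranclp_induct)
    case base
    then show ?case by simp
  next
    case (step y z)
    have "y \<in> G i" using component_from_member[OF i u] step(1) by simp
    then have "sign i z = - sign i y" using sign_flip[OF i _ step(2)] by blast
    moreover have "x$z = - x$y" using form_zero_edge[OF form step(2)] by linarith
    ultimately show ?case using step(3) by simp
  qed
qed

(* A vector with vanishing form that is nonzero at u witnesses that the component of u
   is bipartite: its values +-x_u give the bipartition, and there are no loops. *)
lemma form_zero_reachable_bipartite: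
  assumes form: "x \<bullet> (P *v x) = 0" and nz: "x$u \<noteq> 0"
  shows "bipartite_comp P {w. edge\<^sup>*\<^sup>* u w}"
proof -
  define C where "C = {w. edge\<^sup>*\<^sup>* u w}"
  have pm: "x$w = x$u \<or> x$w = - x$u" if "w \<in> C" for w
  proof -
    have "edge\<^sup>*\<^sup>* u w" using that by (simp add: C_def)
    then show ?thesis
    proof (induction rule: rtranclp_induct)
      case base
      then show ?case by simp
    next
      case (step y z)
      then show ?case using form_zero_edge[OF form step(2)] by auto
    qed
  qed
  have loopless: "\<not> self_loop P w" if "w \<in> C" for w
    using pm[OF that] nz form_zero_loop[OF form, of w] by auto
  have alternate: "x$w' = - x$w" if "edge w w'" for w w'
    using form_zero_edge[OF form that] by linarith
  have "is_bipartition P C {w\<in>C. x$w = x$u} {w\<in>C. x$w = - x$u}"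
    unfolding is_bipartition_def
  proof (intro conjI ballI impI)
    show "{w\<in>C. x$w = x$u} \<union> {w\<in>C. x$w = - x$u} = C" using pm by blast
    show "{w\<in>C. x$w = x$u} \<inter> {w\<in>C. x$w = - x$u} = {}" using nz by auto
    fix a b assume "a \<in> C" "b \<in> C" "edge a b"
    then show "a \<in> {w\<in>C. x$w = x$u} \<longleftrightarrow> b \<in> {w\<in>C. x$w = - x$u}"
      using alternate[of a b] by auto
  qed
  then show ?thesis
    using loopless unfolding bipartite_comp_def conn_comp_def C_def by blast
qed

lemma kernel_spanned:
  assumes Px: "P *v x = 0" and orth: "\<forall>i<r. kvec i \<bullet> x = 0"
  shows "x = 0"
proof (rule ccontr)
  assume "x \<noteq> 0"
  then obtain u where nz: "x$u \<noteq> 0" by (auto simp: vec_eq_iff)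
  have form: "x \<bullet> (P *v x) = 0" using Px by simp
  have "{w. edge\<^sup>*\<^sup>* u w} \<in> G ` {..<r}"
    using form_zero_reachable_bipartite[OF form nz] G_comps by simp
  then obtain i where i: "i < r" and Gi: "G i = {w. edge\<^sup>*\<^sup>* u w}" by auto
  have u: "u \<in> G i" using Gi by simp
  have "kvec i \<bullet> x = (\<Sum>w\<in>G i. sign i w * x$w)"
    unfolding inner_vec_def inner_real_def kvec_def
    by (simp add: if_distrib[of "\<lambda>a. a * _"] sum.If_cases cong: if_cong)
  also have "\<dots> = (\<Sum>w\<in>G i. x$u * sign i u)"
    using form_zero_sign_constant[OF form i u] by (intro sum.cong) (simp_all add: mult.commute)
  also have "\<dots> = csize i * (x$u * sign i u)"
    using csize_card[OF i] by simp
  finally have "kvec i \<bullet> x \<noteq> 0" using csize_pos[OF i] nz by (simp add: sign_def)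
  then show False using orth i by blast
qed

end

locale bipartite_resolvent = bipartite_decomposition P r G A B
  for P :: "real^'n^'n" and r G A B +
  fixes l \<alpha> :: real
  assumes l_pos: "0 < l" and \<alpha>_pos: "0 < \<alpha>"
begin

definition gamma :: real where
  "gamma = (\<Sum>a<r. imbalance a ^ 2 / csize a)"

definition coeff :: "nat \<Rightarrow> nat \<Rightarrow> real" where
  "coeff i j = (if i = j then
       l / (\<alpha> * (\<alpha> + l * gamma) * csize i) * (\<alpha> / l + gamma - imbalance i ^ 2 / csize i)
     else (- l) / (\<alpha> * (\<alpha> + l * gamma)) * (imbalance i / csize i) * (imbalance j / csize j))"

definition S :: "real^'n^'n" where
  "S = \<alpha> *\<^sub>R mat 1 + l *\<^sub>R (\<chi> i j. 1)"

definition N :: "real^'n^'n" where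
  "N = (\<chi> u v. \<Sum>a<r. \<Sum>b<r. coeff a b * kvec a $ u * kvec b $ v)"

lemma gamma_nonneg: "0 \<le> gamma"
  unfolding gamma_def using csize_pos by (auto intro!: sum_nonneg divide_nonneg_pos)

(* The common denominator alpha + l gamma, kept atomic for field arithmetic. *)
definition denom :: real where
  "denom = \<alpha> + l * gamma"

lemma denom_pos: "0 < denom"
  using gamma_nonneg l_pos \<alpha>_pos by (simp add: denom_def add_pos_nonneg)

lemma coeff_split:
  assumes a: "a < r" and b: "b < r"
  shows "coeff a b = (if a = b then 1 / (\<alpha> * csize b) else 0)
    - l * imbalance a * imbalance b / (\<alpha> * csize a * csize b * denom)"
proof (cases "a = b")
  case True
  have "l * (\<alpha> / l + gamma - imbalance b ^ 2 / csize b) = denom - l * imbalance b ^ 2 / csize b"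
    using l_pos by (simp add: denom_def field_simps)
  then have "coeff b b = (denom - l * imbalance b ^ 2 / csize b) / (\<alpha> * denom * csize b)"
    unfolding coeff_def denom_def[symmetric]
    by (metis times_divide_eq_left divide_divide_eq_left mult.commute)
  also have "\<dots> = 1 / (\<alpha> * csize b) - l * imbalance b * imbalance b / (\<alpha> * csize b * csize b * denom)"
    using csize_pos[OF b] denom_pos \<alpha>_pos by (simp add: field_simps power2_eq_square)
  finally show ?thesis using True by simp
next
  case False
  then show ?thesis
    using csize_pos[OF a] csize_pos[OF b] denom_pos \<alpha>_pos
    unfolding coeff_def denom_def[symmetric] by (simp add: field_simps)
qed

lemma imbalance_coeff_sum:
  assumes b: "b < r"
  shows "(\<Sum>a<r. imbalance a * coeff a b) = imbalance b / (csize b * denom)"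
proof -
  have "(\<Sum>a<r. imbalance a * coeff a b) = (\<Sum>a<r. (if a = b then imbalance b / (\<alpha> * csize b) else 0)
      - (l * imbalance b / (\<alpha> * csize b * denom)) * (imbalance a ^ 2 / csize a))"
  proof (rule sum.cong)
    fix a assume "a \<in> {..<r}"
    then have a: "a < r" by simp
    show "imbalance a * coeff a b = (if a = b then imbalance b / (\<alpha> * csize b) else 0)
      - (l * imbalance b / (\<alpha> * csize b * denom)) * (imbalance a ^ 2 / csize a)"
      unfolding coeff_split[OF a b] using csize_pos[OF a] csize_pos[OF b] denom_pos \<alpha>_pos
      by (cases "a = b") (simp_all add: field_simps power2_eq_square)
  qed simp
  also have "\<dots> = imbalance b / (\<alpha> * csize b) - (l * imbalance b / (\<alpha> * csize b * denom)) * gamma"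
    using b by (simp add: sum_subtractf sum_distrib_left gamma_def)
  also have "\<dots> = imbalance b * (denom - l * gamma) / (\<alpha> * csize b * denom)"
    using csize_pos[OF b] denom_pos \<alpha>_pos by (simp add: field_simps)
  also have "denom - l * gamma = \<alpha>" by (simp add: denom_def)
  finally show ?thesis using \<alpha>_pos by simp
qed

lemma coeff_equation:
  assumes "j < r" and "b < r"
  shows "\<alpha> * csize j * coeff j b + l * imbalance j * (\<Sum>a<r. imbalance a * coeff a b)
    = (if j = b then 1 else 0)"
  unfolding coeff_split[OF assms] imbalance_coeff_sum[OF assms(2)]
  using csize_pos[OF assms(1)] csize_pos[OF assms(2)] denom_pos \<alpha>_pos
  by (cases "j = b") (simp_all add: field_simps)

lemma S_apply: "S *v y = \<alpha> *\<^sub>R y + (l * (1 \<bullet> y)) *\<^sub>R 1"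
proof -
  have "(S *v y) $ u = \<alpha> * y$u + l * (1 \<bullet> y)" for u
  proof -
    have "(S *v y) $ u = (\<Sum>v\<in>UNIV. (if u = v then \<alpha> * y$v else 0) + l * y$v)"
      by (auto simp: S_def matrix_vector_mult_def mat_def algebra_simps intro!: sum.cong)
    then show ?thesis
      by (simp add: sum.distrib sum_distrib_left inner_vec_def)
  qed
  then show ?thesis by (simp add: vec_eq_iff)
qed

lemma S_coercive: "\<alpha> * (x \<bullet> x) \<le> x \<bullet> (S *v x)"
proof -
  have "x \<bullet> (S *v x) = \<alpha> * (x \<bullet> x) + l * (1 \<bullet> x)^2"
    by (simp add: S_apply inner_add_right inner_commute power2_eq_square)
  then show ?thesis using l_pos by simp
qed

lemma N_apply: "N *v z = (\<Sum>a<r. \<Sum>b<r. (coeff a b * (kvec b \<bullet> z)) *\<^sub>R kvec a)"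
proof -
  have "(N *v z) $ u = (\<Sum>a<r. \<Sum>b<r. coeff a b * (kvec b \<bullet> z) * kvec a $ u)" for u
  proof -
    have "(N *v z) $ u = (\<Sum>v\<in>UNIV. \<Sum>a<r. \<Sum>b<r. coeff a b * kvec a $ u * kvec b $ v * z $ v)"
      by (simp add: N_def matrix_vector_mult_def sum_distrib_right)
    also have "\<dots> = (\<Sum>a<r. \<Sum>b<r. \<Sum>v\<in>UNIV. coeff a b * kvec a $ u * kvec b $ v * z $ v)"
      by (subst sum.swap) (simp add: sum.swap[of _ UNIV])
    also have "\<dots> = (\<Sum>a<r. \<Sum>b<r. coeff a b * (kvec b \<bullet> z) * kvec a $ u)"
      by (simp add: inner_vec_def sum_distrib_left algebra_simps)
    finally show ?thesis .
  qed
  then show ?thesis by (simp add: vec_eq_iff sum_component)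
qed

lemma P_N: "P *v (N *v z) = 0"
  by (simp add: N_apply linear_sum[OF matrix_vector_mul_linear] matrix_vector_mult_scaleR P_kvec)

lemma kvec_SN:
  assumes j: "j < r"
  shows "kvec j \<bullet> (S *v (N *v z)) = kvec j \<bullet> z"
proof -
  have "kvec j \<bullet> (N *v z)
      = (\<Sum>a<r. \<Sum>b<r. coeff a b * (kvec b \<bullet> z) * (if j = a then csize j else 0))"
    using j by (simp add: N_apply inner_sum_right kvec_inner)
  also have "\<dots> = (\<Sum>a<r. if j = a then (\<Sum>b<r. coeff j b * (kvec b \<bullet> z) * csize j) else 0)"
    by (rule sum.cong) auto
  finally have kN: "kvec j \<bullet> (N *v z) = (\<Sum>b<r. csize j * coeff j b * (kvec b \<bullet> z))"
    using j by (simp add: algebra_simps)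
  have "1 \<bullet> (N *v z) = (\<Sum>a<r. \<Sum>b<r. coeff a b * (kvec b \<bullet> z) * imbalance a)"
    by (simp add: N_apply inner_sum_right inner_commute[of 1] kvec_sum)
  also have "\<dots> = (\<Sum>b<r. \<Sum>a<r. coeff a b * (kvec b \<bullet> z) * imbalance a)"
    by (rule sum.swap)
  finally have oneN: "1 \<bullet> (N *v z) = (\<Sum>b<r. (\<Sum>a<r. imbalance a * coeff a b) * (kvec b \<bullet> z))"
    by (simp add: sum_distrib_left sum_distrib_right algebra_simps)
  have "kvec j \<bullet> (S *v (N *v z)) = \<alpha> * (kvec j \<bullet> (N *v z)) + l * (1 \<bullet> (N *v z)) * imbalance j"
    using j by (simp add: S_apply kvec_sum inner_add_right)
  also have "\<dots> = (\<Sum>b<r. (\<alpha> * csize j * coeff j b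
      + l * imbalance j * (\<Sum>a<r. imbalance a * coeff a b)) * (kvec b \<bullet> z))"
    by (simp add: kN oneN sum_distrib_left sum_distrib_right sum.distrib algebra_simps)
  also have "\<dots> = (\<Sum>b<r. if j = b then kvec b \<bullet> z else 0)"
    using coeff_equation[OF j] by (intro sum.cong) auto
  also have "\<dots> = kvec j \<bullet> z" using j by simp
  finally show ?thesis .
qed

lemma N_entry:
  assumes i: "i < r" and j: "j < r" and u: "u \<in> G i" and v: "v \<in> G j"
  shows "N $ u $ v = coeff i j * sign i u * sign j v"
proof -
  have entry: "kvec a $ w = (if a = k then sign k w else 0)"
    if "k < r" "a < r" "w \<in> G k" for a k w
  proof (cases "a = k")
    case True
    then show ?thesis using that(3) by (simp add: kvec_def)
  next
    case False
    then have "w \<notin> G a" using components_disjoint[OF that(1,2,3)] by blast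
    then show ?thesis using False by (simp add: kvec_def)
  qed
  have "N $ u $ v = (\<Sum>a<r. \<Sum>b<r. coeff a b * kvec a $ u * kvec b $ v)"
    by (simp add: N_def)
  also have "\<dots> = (\<Sum>a<r. \<Sum>b<r. coeff a b * (if a = i then sign i u else 0)
      * (if b = j then sign j v else 0))"
    by (intro sum.cong refl) (simp add: entry[OF i _ u] entry[OF j _ v])
  also have "\<dots> = coeff i j * sign i u * sign j v"
    using i j by (simp add: if_distrib[of "\<lambda>t. t * _"] if_distrib[of "\<lambda>t. _ * t"] cong: if_cong)
  finally show ?thesis .
qed

end

theorem corollary4p9:
  fixes P :: "real^'n^'n" and l \<alpha> :: real and r :: nat
    and G A B :: "nat \<Rightarrow> 'n set"
  assumes n3: "CARD('n) \<ge> 3"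
    and l_pos: "l > 0"
    and alpha: "\<alpha> \<ge> (real CARD('n) - 2) * l"
    and SL: "signless_laplacian P"
    and G_inj: "inj_on G {..<r}"
    and G_comps: "G ` {..<r} = {C. bipartite_comp P C}"
    and G_bip: "\<forall>i<r. is_bipartition P (G i) (A i) (B i)"
  shows "let S = \<alpha> *\<^sub>R mat 1 + l *\<^sub>R (\<chi> i j. 1 :: real^'n^'n);
             p = (\<lambda>i. real (card (A i))); q = (\<lambda>i. real (card (B i)));
             \<gamma> = (\<Sum>i<r. (p i - q i)^2 / (p i + q i));
             c = (\<lambda>i j. if i = j then
                    l / (\<alpha> * (\<alpha> + l * \<gamma>) * (p i + q i))
                      * (\<alpha> / l + \<gamma> - (p i - q i)^2 / (p i + q i))
                  else
                    (- l) / (\<alpha> * (\<alpha> + l * \<gamma>))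
                      * ((p i - q i) / (p i + q i)) * ((p j - q j) / (p j + q j)));
             s = (\<lambda>i u. if u \<in> A i then (1::real) else -1)
         in \<exists>N. ((\<lambda>t. matrix_inv (S + t *\<^sub>R P)) \<longlongrightarrow> N) at_top
              \<and> (\<forall>i<r. \<forall>j<r. \<forall>u\<in>G i. \<forall>v\<in>G j. N$u$v = c i j * s i u * s j v)"
proof -
  (* The size hypothesis on alpha is only needed to make S positive definite. *)
  have "1 * l \<le> (real CARD('n) - 2) * l" using n3 l_pos by (intro mult_right_mono) auto
  then have \<alpha>_pos: "0 < \<alpha>" using alpha l_pos by linarith
  interpret bipartite_resolvent P r G A B l \<alpha>
    by unfold_locales (use l_pos \<alpha>_pos SL G_inj G_comps G_bip in auto)
  have residual: "\<exists>y. P *v y = z - S *v (N *v z)" for z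
  proof (rule symmetric_range_orthogonal_kernel[OF symmetric finite_lessThan, where k = kvec])
    show "\<And>i. i \<in> {..<r} \<Longrightarrow> P *v kvec i = 0" using P_kvec by simp
    show "\<And>x. P *v x = 0 \<Longrightarrow> \<forall>i\<in>{..<r}. kvec i \<bullet> x = 0 \<Longrightarrow> x = 0"
      using kernel_spanned by simp
    show "\<And>i. i \<in> {..<r} \<Longrightarrow> kvec i \<bullet> (z - S *v (N *v z)) = 0"
      using kvec_SN by (simp add: inner_diff_right)
  qed
  have "((\<lambda>t. matrix_inv (S + t *\<^sub>R P)) \<longlongrightarrow> N) at_top"
    by (rule resolvent_limit[OF \<alpha>_pos S_coercive symmetric psd P_N residual])
  then show ?thesis
    using N_entry unfolding Let_def
    by (auto simp: S_def coeff_def gamma_def csize_def imbalance_def sign_def intro!: exI[of _ N])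
qed

end
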